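(* Let $n,p,m\in\mathbb N$ with $n\ge m\ge3$, let $\boldsymbol\varepsilon\sim\mathcal N_m(\mathbf0,\mathbf I)$, let $\mathbf a\in\mathbb R^m$ and suppose $0<\eta<pe^{-(n-m)-2}$. Then $$\mathbb P\Big(\mathbf a^T\boldsymbol\varepsilon/\|\boldsymbol\varepsilon\|_2>\sqrt{2\log(p/\eta)/n}\,\|\mathbf a\|_2\Big)\le\frac1p\cdot\frac{(1+r_m)\eta}{\sqrt{\pi\log(p/\eta)}},$$ where $(r_m)$ is a sequence depending only on $m$ with $r_m\to0$ as $m\to\infty$. *)

theory Defs
  imports "HOL-Probability.Probability"
begin

text \<open>Law of a standard Gaussian vector N_m(0, I) on R^m, vectors represented as
  functions nat \<Rightarrow> real with coordinates indexed by {..<m}: the m-fold product of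
  the standard normal distribution on the real line.\<close>
definition std_gauss_vec :: "nat \<Rightarrow> (nat \<Rightarrow> real) measure" where
  "std_gauss_vec m = PiM {..<m} (\<lambda>_. density lborel std_normal_density)"

definition vnorm :: "nat \<Rightarrow> (nat \<Rightarrow> real) \<Rightarrow> real" where
  "vnorm m x = sqrt (\<Sum>i<m. (x i)\<^sup>2)"

definition vinner :: "nat \<Rightarrow> (nat \<Rightarrow> real) \<Rightarrow> (nat \<Rightarrow> real) \<Rightarrow> real" where
  "vinner m x y = (\<Sum>i<m. x i * y i)"

end

theory Submission
  imports Defs "HOL-Analysis.Harmonic_Numbers" "HOL-Real_Asymp.Real_Asymp"
begin

text \<open>By rotation invariance of \<open>N\<^sub>m(0, I)\<close>, the ratio \<open>a\<^sup>T\<epsilon> / \<parallel>\<epsilon>\<parallel>\<close> has the law of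
  \<open>\<parallel>a\<parallel> x / sqrt (x\<^sup>2 + S)\<close>, where \<open>x\<close> is standard normal and \<open>S\<close> is an independent
  \<open>\<chi>\<^sup>2\<close> variable with \<open>k = m - 1\<close> degrees of freedom. Exceeding \<open>t \<parallel>a\<parallel>\<close> forces
  \<open>x > sqrt (c S)\<close> with \<open>c = t\<^sup>2 / (1 - t\<^sup>2)\<close>. Bounding this Gaussian tail by the Mills ratio
  for large \<open>S\<close> and by \<open>2 exp (- c S / 2)\<close> for small \<open>S\<close>, both bounds are exponential in \<open>S\<close>,
  and the moment generating function \<open>E exp (- \<beta> S) = (1 + 2 \<beta>) powr (- k / 2)\<close> turns them into
  \<open>(1 - t\<^sup>2) powr (k / 2)\<close> times explicit factors. For \<open>t\<^sup>2 = 2 log (p / \<eta>) / n\<close> the hypothesis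
  on \<open>\<eta>\<close> gives \<open>(1 - t\<^sup>2) powr (k / 2) \<le> (\<eta> / p) sqrt (k / n)\<close>.\<close>

section \<open>Elementary inequalities\<close>

lemma ln_one_plus_ge:
  fixes x :: real assumes "0 \<le> x" shows "x - x\<^sup>2 / 2 \<le> ln (1 + x)"
proof -
  let ?f = "\<lambda>x::real. ln (1 + x) - (x - x\<^sup>2 / 2)"
  have "?f 0 \<le> ?f x"
  proof (rule DERIV_nonneg_imp_nondecreasing[OF assms])
    fix z :: real assume "0 \<le> z"
    then have "(?f has_real_derivative (1 / (1 + z) - (1 - z))) (at z)"
      by (auto intro!: derivative_eq_intros simp: power2_eq_square field_simps)
    moreover have "0 \<le> 1 / (1 + z) - (1 - z)"
      using \<open>0 \<le> z\<close> by (simp add: field_simps power2_eq_square)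
    ultimately show "\<exists>d. (?f has_real_derivative d) (at z) \<and> 0 \<le> d" by blast
  qed
  then show ?thesis by simp
qed

lemma ln_one_minus_le:
  fixes y :: real assumes "0 \<le> y" "y < 1" shows "ln (1 - y) \<le> - y - y\<^sup>2 / 2"
proof -
  let ?f = "\<lambda>x::real. - x - x\<^sup>2 / 2 - ln (1 - x)"
  have "?f 0 \<le> ?f y"
  proof (rule DERIV_nonneg_imp_nondecreasing[OF assms(1)])
    fix z :: real assume "0 \<le> z" "z \<le> y"
    with assms have "z < 1" by simp
    then have "(?f has_real_derivative (-1 - z + 1 / (1 - z))) (at z)"
      by (auto intro!: derivative_eq_intros simp: power2_eq_square field_simps)
    moreover have "(1 + z) * (1 - z) \<le> 1" by (simp add: algebra_simps)
    then have "0 \<le> -1 - z + 1 / (1 - z)" using \<open>z < 1\<close> by (simp add: field_simps)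
    ultimately show "\<exists>d. (?f has_real_derivative d) (at z) \<and> 0 \<le> d" by blast
  qed
  then show ?thesis by simp
qed

lemma half_mult_ln_one_minus_add_antimono:
  fixes k n L0 L :: real
  assumes k: "0 \<le> k" and n: "0 < n" and L: "L0 \<le> L" "2 * L < n"
    and L0: "0 < n - 2 * L0" "n - 2 * L0 \<le> k"
  shows "(k / 2) * ln (1 - 2 * L / n) + L \<le> (k / 2) * ln (1 - 2 * L0 / n) + L0"
proof -
  have "1 - 2 * L / n = (n - 2 * L) / n" "1 - 2 * L0 / n = (n - 2 * L0) / n"
    using n by (simp_all add: field_simps)
  then have "ln (1 - 2 * L / n) - ln (1 - 2 * L0 / n) = ln ((n - 2 * L) / (n - 2 * L0))"
    using n L L0 by (simp add: ln_div)
  also have "\<dots> \<le> (n - 2 * L) / (n - 2 * L0) - 1"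
    using L L0 by (intro ln_le_minus_one) simp
  also have "\<dots> = - (2 * (L - L0) / (n - 2 * L0))" using L0 by (simp add: field_simps)
  finally have "(k / 2) * ln (1 - 2 * L / n) \<le> (k / 2) * (ln (1 - 2 * L0 / n) - 2 * (L - L0) / (n - 2 * L0))"
    using k by (intro mult_left_mono) auto
  also have "\<dots> = (k / 2) * ln (1 - 2 * L0 / n) - (L - L0) * (k / (n - 2 * L0))"
    using L0 by (simp add: field_simps)
  also have "\<dots> \<le> (k / 2) * ln (1 - 2 * L0 / n) - (L - L0)"
  proof -
    have "(L - L0) * 1 \<le> (L - L0) * (k / (n - 2 * L0))"
      using L L0 by (intro mult_left_mono) (simp_all add: field_simps)
    then show ?thesis by simp
  qed
  finally show ?thesis by simp
qed

text \<open>At \<open>L\<^sub>0 = n - k + 1\<close> the quantity \<open>1 - 2 L\<^sub>0 / n\<close> factors as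
  \<open>(1 - (j + 2) / k) / (1 + j / k)\<close> with \<open>j = n - k\<close>, where the second-order bounds on \<open>ln\<close> apply.\<close>
lemma half_mult_ln_one_minus_le:
  fixes k n L :: real
  assumes k: "2 \<le> k" and n: "k + 1 \<le> n" and L1: "n - k + 1 < L" and L2: "2 * L < n"
  shows "(k / 2) * ln (1 - 2 * L / n) \<le> - L + ln (k / n) / 2"
proof -
  define j where "j = n - k"
  define L0 where "L0 = j + 1"
  have n_eq: "n = k + j" and j: "1 \<le> j" using n by (simp_all add: j_def)
  have kj: "k - j - 2 > 0" using L1 L2 by (simp add: j_def)
  have shift: "(k / 2) * ln (1 - 2 * L / n) + L \<le> (k / 2) * ln (1 - 2 * L0 / n) + L0"
    using k j kj L1 L2 by (intro half_mult_ln_one_minus_add_antimono) (simp_all add: L0_def n_eq)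
  define x where "x = j / k"
  define y where "y = (j + 2) / k"
  have x0: "x \<ge> 0" using j k by (simp add: x_def)
  have y0: "0 \<le> y" "y < 1" using kj k j by (auto simp: y_def field_simps)
  have "1 - y = (k - j - 2) / k" "1 + x = (k + j) / k"
    using k by (simp_all add: x_def y_def field_simps)
  then have "(1 - y) / (1 + x) = (k - j - 2) / (k + j)"
    using k j by (simp add: divide_divide_eq_right)
  moreover have "1 - 2 * L0 / n = (k - j - 2) / (k + j)"
    using k j by (simp add: L0_def n_eq field_simps)
  ultimately have "1 - 2 * L0 / n = (1 - y) / (1 + x)" by simp
  then have "ln (1 - 2 * L0 / n) = ln (1 - y) - ln (1 + x)"
    using y0 x0 by (simp add: ln_div)
  also have "\<dots> \<le> (- y - y\<^sup>2 / 2) - (x - x\<^sup>2 / 2)"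
    using ln_one_minus_le[OF y0] ln_one_plus_ge[OF x0] by linarith
  finally have "(k / 2) * ln (1 - 2 * L0 / n) \<le> (k / 2) * ((- y - y\<^sup>2 / 2) - (x - x\<^sup>2 / 2))"
    using k by (intro mult_left_mono) auto
  also have "\<dots> = - (j + 1) / k - L0"
    using k by (simp add: x_def y_def L0_def field_simps power2_eq_square)
  finally have at_L0: "(k / 2) * ln (1 - 2 * L0 / n) + L0 \<le> - (j + 1) / k" by linarith
  have "k / n = 1 / (1 + x)" using k by (simp add: x_def n_eq field_simps)
  then have "ln (k / n) / 2 \<ge> - x / 2"
    using x0 ln_add_one_self_le_self[OF x0] by (simp add: ln_div)
  moreover have "0 \<le> j * k" using j k by simp
  then have "- (j + 1) / k \<le> - x / 2"
    using k by (simp add: x_def field_simps)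
  ultimately show ?thesis using shift at_L0 by linarith
qed

lemma one_minus_powr_half_le:
  fixes k n L :: real
  assumes "2 \<le> k" and "k + 1 \<le> n" and "n - k + 1 < L" and "2 * L < n"
  shows "(1 - 2 * L / n) powr (k / 2) \<le> exp (- L) * sqrt (k / n)"
proof -
  have "2 * L / n < 1" using assms by (simp add: divide_less_eq)
  then have "(1 - 2 * L / n) powr (k / 2) = exp ((k / 2) * ln (1 - 2 * L / n))"
    using assms by (simp add: powr_def)
  also have "\<dots> \<le> exp (- L + ln (k / n) / 2)"
    using half_mult_ln_one_minus_le[OF assms] by simp
  also have "\<dots> = exp (- L) * (k / n) powr (1 / 2)"
    unfolding exp_add using assms by (simp add: powr_def)
  also have "(k / n) powr (1 / 2) = sqrt (k / n)"
    using assms by (simp add: powr_half_sqrt)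
  finally show ?thesis .
qed

lemma exp_quarter_mult_two_powr_le:
  fixes k :: real assumes "0 \<le> k"
  shows "exp (k / 4) * 2 powr (- k / 2) \<le> exp (- k / 12)"
proof -
  have "(k / 2) * (2 / 3) \<le> (k / 2) * ln 2"
    using assms by (intro mult_left_mono ln2_ge_two_thirds) simp
  then have "exp (k / 4 + (- k / 2) * ln 2) \<le> exp (- k / 12)" by simp
  then show ?thesis unfolding powr_def exp_add by simp
qed

lemma tail_factor_bound:
  fixes k n L W :: real
  assumes k: "0 < k" and kn: "k \<le> n" and L: "0 < L" "L \<le> k + 1"
    and W: "0 \<le> W" "W \<le> exp (- L) * sqrt (k / n)"
  shows "W * (1 / sqrt (pi * k * (2 * L / n)) + 2 * exp (k / 4) * 2 powr (- k / 2))
    \<le> (1 + 2 * sqrt (pi * (k + 1)) * exp (- k / 12)) * exp (- L) / sqrt (pi * L)"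
proof -
  have n: "0 < n" using k kn by simp
  have gauss_term: "W / sqrt (pi * k * (2 * L / n)) \<le> exp (- L) / sqrt (pi * L)"
  proof -
    have s: "sqrt (pi * k * (2 * L / n)) = sqrt (2 * pi * L) * sqrt (k / n)"
      by (simp add: real_sqrt_mult[symmetric] mult_ac)
    have pos: "0 < sqrt (2 * pi * L) * sqrt (k / n)" using L k n by simp
    have "W / sqrt (pi * k * (2 * L / n)) \<le> exp (- L) * sqrt (k / n) / (sqrt (2 * pi * L) * sqrt (k / n))"
      unfolding s using W pos by (intro divide_right_mono) auto
    also have "\<dots> = exp (- L) / sqrt (2 * pi * L)" using k n by simp
    also have "\<dots> \<le> exp (- L) / sqrt (pi * L)" using L by (intro divide_left_mono) auto
    finally show ?thesis .
  qed
  have factor: "2 * exp (k / 4) * 2 powr (- k / 2) \<le> 2 * exp (- k / 12)"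
    using exp_quarter_mult_two_powr_le[of k] k by simp
  have "sqrt (k / n) \<le> 1" using k kn by simp
  then have "exp (- L) * sqrt (k / n) \<le> exp (- L)" by (intro mult_left_le) auto
  then have "W \<le> exp (- L)" using W(2) by linarith
  then have "W * (2 * exp (k / 4) * 2 powr (- k / 2)) \<le> exp (- L) * (2 * exp (- k / 12))"
    by (rule mult_mono[OF _ factor]) auto
  also have "\<dots> \<le> exp (- L) * (2 * exp (- k / 12)) * (sqrt (pi * (k + 1)) / sqrt (pi * L))"
  proof -
    have "1 \<le> sqrt (pi * (k + 1)) / sqrt (pi * L)" using L by simp
    from mult_left_mono[OF this, of "exp (- L) * (2 * exp (- k / 12))"] show ?thesis by simp
  qed
  finally have chi_term: "W * (2 * exp (k / 4) * 2 powr (- k / 2))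
      \<le> 2 * sqrt (pi * (k + 1)) * exp (- k / 12) * exp (- L) / sqrt (pi * L)"
    by (simp add: mult_ac)
  show ?thesis
    using gauss_term chi_term by (simp add: distrib_left distrib_right add_divide_distrib)
qed

section \<open>The standard normal distribution\<close>

definition std_normal :: "real measure" where
  "std_normal = density lborel std_normal_density"

definition std_normal_PiM :: "nat set \<Rightarrow> (nat \<Rightarrow> real) measure" where
  "std_normal_PiM I = PiM I (\<lambda>_. std_normal)"

lemma prob_space_std_normal: "prob_space std_normal"
  unfolding std_normal_def by (rule prob_space_normal_density) simp

lemma sets_std_normal [simp, measurable_cong]: "sets std_normal = sets borel"
  by (simp add: std_normal_def)

lemma space_std_normal [simp]: "space std_normal = UNIV"
  by (simp add: std_normal_def)

interpretation std_normal: prob_space std_normal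
  by (rule prob_space_std_normal)

interpretation std_normal_product: product_sigma_finite "\<lambda>_::nat. std_normal"
  by unfold_locales

lemma prob_space_std_normal_PiM: "prob_space (std_normal_PiM I)"
  unfolding std_normal_PiM_def by (rule prob_space_PiM) (simp add: prob_space_std_normal)

interpretation std_normal_PiM_pair: pair_sigma_finite "std_normal_PiM I" std_normal
proof -
  interpret prob_space "std_normal_PiM I" by (rule prob_space_std_normal_PiM)
  show "pair_sigma_finite (std_normal_PiM I) std_normal" by unfold_locales
qed

lemma std_gauss_vec_eq_std_normal_PiM: "std_gauss_vec m = std_normal_PiM {..<m}"
  by (simp add: std_gauss_vec_def std_normal_PiM_def std_normal_def)

lemma nn_integral_std_normal:
  assumes [measurable]: "f \<in> borel_measurable borel"
  shows "(\<integral>\<^sup>+x. f x \<partial>std_normal) = (\<integral>\<^sup>+x. ennreal (std_normal_density x) * f x \<partial>lborel)"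
  unfolding std_normal_def by (subst nn_integral_density) auto

lemma nn_integral_std_normal_reflect:
  assumes [measurable]: "f \<in> borel_measurable borel"
  shows "(\<integral>\<^sup>+x. f (- x) \<partial>std_normal) = (\<integral>\<^sup>+x. f x \<partial>std_normal)"
proof -
  have "(\<integral>\<^sup>+x. f x \<partial>std_normal) = (\<integral>\<^sup>+x. ennreal (std_normal_density x) * f x \<partial>lborel)"
    by (rule nn_integral_std_normal) simp
  also have "\<dots> = ennreal \<bar>-1::real\<bar> *
      (\<integral>\<^sup>+x. ennreal (std_normal_density (0 + (-1) * x)) * f (0 + (-1) * x) \<partial>lborel)"
    by (rule nn_integral_real_affine) auto
  also have "\<dots> = (\<integral>\<^sup>+x. ennreal (std_normal_density x) * f (- x) \<partial>lborel)"
    by (simp add: std_normal_density_def)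
  also have "\<dots> = (\<integral>\<^sup>+x. f (- x) \<partial>std_normal)"
    by (rule nn_integral_std_normal[symmetric]) simp
  finally show ?thesis ..
qed

lemma nn_integral_std_normal_exp_square:
  fixes \<beta> :: real assumes "0 \<le> \<beta>"
  shows "(\<integral>\<^sup>+x. ennreal (exp (- \<beta> * x\<^sup>2)) \<partial>std_normal) = ennreal ((1 + 2 * \<beta>) powr (- 1 / 2))"
proof -
  define \<sigma> where "\<sigma> = 1 / sqrt (1 + 2 * \<beta>)"
  have \<sigma>: "0 < \<sigma>" "\<sigma>\<^sup>2 = 1 / (1 + 2 * \<beta>)" using assms by (simp_all add: \<sigma>_def power_divide)
  have density_eq: "std_normal_density x * exp (- (\<beta> * x\<^sup>2)) = \<sigma> * normal_density 0 \<sigma> x" for x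
  proof -
    have "sqrt (2 * pi * \<sigma>\<^sup>2) = sqrt (2 * pi) * \<sigma>" using \<sigma>(1) by (simp add: real_sqrt_mult)
    moreover have "- x\<^sup>2 / (2 * \<sigma>\<^sup>2) = - x\<^sup>2 / 2 + - (\<beta> * x\<^sup>2)" using assms by (simp add: \<sigma> field_simps)
    ultimately show ?thesis using \<sigma>
      by (simp add: normal_density_def std_normal_density_def exp_add[symmetric])
  qed
  have "(\<integral>\<^sup>+x. ennreal (exp (- \<beta> * x\<^sup>2)) \<partial>std_normal)
      = (\<integral>\<^sup>+x. ennreal \<sigma> * ennreal (normal_density 0 \<sigma> x) \<partial>lborel)"
    using \<sigma> by (simp add: nn_integral_std_normal ennreal_mult[symmetric] density_eq)
  also have "\<dots> = ennreal \<sigma> * (\<integral>\<^sup>+x. ennreal (normal_density 0 \<sigma> x) \<partial>lborel)"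
    by (rule nn_integral_cmult) simp
  also have "(\<integral>\<^sup>+x. ennreal (normal_density 0 \<sigma> x) \<partial>lborel) = 1"
  proof -
    interpret prob_space "density lborel (normal_density 0 \<sigma>)"
      by (rule prob_space_normal_density) (rule \<sigma>(1))
    show ?thesis using emeasure_space_1 by (simp add: emeasure_density)
  qed
  finally show ?thesis
    using assms by (simp add: \<sigma>_def powr_minus_divide powr_half_sqrt)
qed

lemma std_normal_tail_le_mills:
  fixes y :: real assumes y: "0 < y"
  shows "emeasure std_normal {y<..} \<le> ennreal (std_normal_density y / y)"
proof -
  have "emeasure std_normal {y<..} \<le> emeasure std_normal {y..}"
    by (intro emeasure_mono) auto
  also have "\<dots> = (\<integral>\<^sup>+x. ennreal (std_normal_density x) * indicator {y..} x \<partial>lborel)"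
    unfolding std_normal_def by (subst emeasure_density) auto
  also have "\<dots> \<le> (\<integral>\<^sup>+x. ennreal (1 / y) * (ennreal (x * std_normal_density x) * indicator {y..} x) \<partial>lborel)"
  proof (intro nn_integral_mono)
    fix x show "ennreal (std_normal_density x) * indicator {y..} x
        \<le> ennreal (1 / y) * (ennreal (x * std_normal_density x) * indicator {y..} x)"
    proof (cases "y \<le> x")
      case True
      then have "std_normal_density x \<le> (1 / y) * (x * std_normal_density x)"
        using y by (simp add: field_simps mult_right_mono)
      then show ?thesis using True y by (simp add: ennreal_mult[symmetric] ennreal_leI)
    qed simp
  qed
  also have "\<dots> = ennreal (1 / y) * (\<integral>\<^sup>+x. ennreal (x * std_normal_density x) * indicator {y..} x \<partial>lborel)"
    by (rule nn_integral_cmult) simp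
  also have "(\<integral>\<^sup>+x. ennreal (x * std_normal_density x) * indicator {y..} x \<partial>lborel)
      = 0 - (- std_normal_density y)"
  proof (rule nn_integral_FTC_atLeast)
    fix x assume "y \<le> x"
    show "((\<lambda>x. - std_normal_density x) has_real_derivative x * std_normal_density x) (at x)"
      unfolding std_normal_density_def
      by (auto intro!: derivative_eq_intros simp: power2_eq_square field_simps)
    show "0 \<le> x * std_normal_density x" using \<open>y \<le> x\<close> y by simp
  next
    show "((\<lambda>x. - std_normal_density x) \<longlongrightarrow> 0) at_top"
      unfolding std_normal_density_def by real_asymp
  qed simp
  finally show ?thesis using y by (simp add: ennreal_mult[symmetric])
qed

lemma std_normal_tail_le_exp:
  fixes y :: real assumes y: "0 \<le> y"
  shows "emeasure std_normal {y<..} \<le> ennreal (2 * exp (- y\<^sup>2 / 2))"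
proof (cases "y \<le> 1")
  case True
  have "exp (1 / 2 :: real) ^ 2 \<le> 2 ^ 2"
    using exp_le by (simp add: exp_double[symmetric])
  then have "exp (1 / 2 :: real) \<le> 2" by (rule power2_le_imp_le) simp
  then have "1 / 2 \<le> exp (- (1 / 2 :: real))" by (simp add: exp_minus field_simps)
  also have "exp (- (1 / 2)) \<le> exp (- y\<^sup>2 / 2)"
    using True y by (simp add: power_le_one)
  finally have "1 \<le> ennreal (2 * exp (- y\<^sup>2 / 2))" by (simp add: ennreal_ge_1)
  then show ?thesis using std_normal.emeasure_le_1 order_trans by blast
next
  case False
  have "std_normal_density y / y \<le> std_normal_density y / 1"
    using False by (intro divide_left_mono) auto
  also have "\<dots> = std_normal_density y" by simp
  also have "\<dots> \<le> 2 * exp (- y\<^sup>2 / 2)"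
  proof -
    have "1 \<le> sqrt (2 * pi)" using pi_gt3 by simp
    then have "1 / sqrt (2 * pi) \<le> (2::real)" by (simp add: divide_le_eq del: real_sqrt_ge_1_iff)
    then show ?thesis unfolding std_normal_density_def by (intro mult_right_mono) auto
  qed
  finally show ?thesis
    using std_normal_tail_le_mills[of y] False by (simp add: order_trans ennreal_leI)
qed

text \<open>The Mills-ratio bound is used when \<open>S \<ge> w\<^sub>0\<close> and the crude bound when \<open>S < w\<^sub>0\<close>; the factor
  \<open>exp (lam w\<^sub>0)\<close> makes the second term dominate the crude bound exactly in the latter case.\<close>
lemma std_normal_tail_sqrt_le:
  fixes c S w0 lam :: real
  assumes c: "0 < c" and S: "0 \<le> S" and w0: "0 < w0" and lam: "0 \<le> lam"
  shows "emeasure std_normal {sqrt (c * S)<..}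
    \<le> ennreal (1 / sqrt (2 * pi * c * w0) * exp (- (c / 2) * S) + 2 * exp (lam * w0) * exp (- (c / 2 + lam) * S))"
proof -
  define y where "y = sqrt (c * S)"
  have y2: "y\<^sup>2 = c * S" using c S by (simp add: y_def)
  show ?thesis
  proof (cases "w0 \<le> S")
    case True
    have "0 < sqrt (c * w0)" using c w0 by simp
    moreover have "sqrt (c * w0) \<le> y" unfolding y_def using True c by simp
    ultimately have "0 < y" by (rule order.strict_trans2)
    have "std_normal_density y / y = exp (- (c / 2) * S) / (sqrt (2 * pi) * y)"
      by (simp add: std_normal_density_def y2)
    also have "\<dots> \<le> exp (- (c / 2) * S) / (sqrt (2 * pi) * sqrt (c * w0))"
      using \<open>sqrt (c * w0) \<le> y\<close> \<open>0 < sqrt (c * w0)\<close> \<open>0 < y\<close> by (intro divide_left_mono mult_left_mono mult_pos_pos) auto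
    also have "\<dots> = 1 / sqrt (2 * pi * c * w0) * exp (- (c / 2) * S)"
      by (simp add: real_sqrt_mult mult.assoc)
    finally show ?thesis
      using std_normal_tail_le_mills[OF \<open>0 < y\<close>] unfolding y_def[symmetric]
      by (elim order_trans) (intro ennreal_leI add_increasing2; simp)
  next
    case False
    have "- y\<^sup>2 / 2 \<le> lam * w0 + - (c / 2 + lam) * S"
      using False lam mult_right_mono[of S w0 lam] unfolding y2 by (simp add: algebra_simps)
    then have bound: "2 * exp (- y\<^sup>2 / 2) \<le> 2 * exp (lam * w0) * exp (- (c / 2 + lam) * S)"
      by (simp add: exp_add[symmetric])
    have "emeasure std_normal {y<..} \<le> ennreal (2 * exp (- y\<^sup>2 / 2))"
      by (rule std_normal_tail_le_exp) (use c S in \<open>simp add: y_def\<close>)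
    also have "\<dots> \<le> ennreal (1 / sqrt (2 * pi * c * w0) * exp (- (c / 2) * S)
        + 2 * exp (lam * w0) * exp (- (c / 2 + lam) * S))"
      using bound c w0 by (intro ennreal_leI add_increasing) auto
    finally show ?thesis unfolding y_def .
  qed
qed

lemma nn_integral_std_normal_PiM_exp_sum_squares:
  assumes "finite K" and "0 \<le> \<beta>"
  shows "(\<integral>\<^sup>+\<epsilon>. ennreal (exp (- \<beta> * (\<Sum>i\<in>K. (\<epsilon> i)\<^sup>2))) \<partial>std_normal_PiM K)
       = ennreal ((1 + 2 * \<beta>) powr (- real (card K) / 2))"
proof -
  have "(\<integral>\<^sup>+\<epsilon>. ennreal (exp (- \<beta> * (\<Sum>i\<in>K. (\<epsilon> i)\<^sup>2))) \<partial>std_normal_PiM K)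
      = (\<integral>\<^sup>+\<epsilon>. (\<Prod>i\<in>K. ennreal (exp (- \<beta> * (\<epsilon> i)\<^sup>2))) \<partial>std_normal_PiM K)"
    using assms by (intro nn_integral_cong)
      (simp add: sum_distrib_left exp_sum prod_ennreal sum_negf[symmetric])
  also have "\<dots> = (\<Prod>i\<in>K. (\<integral>\<^sup>+x. ennreal (exp (- \<beta> * x\<^sup>2)) \<partial>std_normal))"
    unfolding std_normal_PiM_def by (rule std_normal_product.product_nn_integral_prod) (use assms in simp_all)
  also have "\<dots> = ennreal ((1 + 2 * \<beta>) powr (- 1 / 2)) ^ card K"
    using nn_integral_std_normal_exp_square[OF assms(2)] by simp
  also have "\<dots> = ennreal (((1 + 2 * \<beta>) powr (- 1 / 2)) ^ card K)"
    by (simp add: ennreal_power)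
  also have "((1 + 2 * \<beta>) powr (- 1 / 2)) ^ card K = (1 + 2 * \<beta>) powr (- real (card K) / 2)"
    using assms by (simp add: powr_power)
  finally show ?thesis .
qed

section \<open>Rotation invariance\<close>

lemma nn_integral_lborel_shear_fst:
  fixes F :: "real \<Rightarrow> real \<Rightarrow> ennreal"
  assumes [measurable]: "case_prod F \<in> borel_measurable (lborel \<Otimes>\<^sub>M lborel)"
  shows "(\<integral>\<^sup>+y. \<integral>\<^sup>+x. F (x + a * y) y \<partial>lborel \<partial>lborel) = (\<integral>\<^sup>+y. \<integral>\<^sup>+x. F x y \<partial>lborel \<partial>lborel)"
proof -
  have "(\<integral>\<^sup>+x. F x y \<partial>lborel) = ennreal \<bar>1::real\<bar> * (\<integral>\<^sup>+x. F (a * y + 1 * x) y \<partial>lborel)" for y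
    by (rule nn_integral_real_affine) simp_all
  then show ?thesis by (simp add: add.commute)
qed

lemma nn_integral_lborel_shear_snd:
  fixes F :: "real \<Rightarrow> real \<Rightarrow> ennreal"
  assumes [measurable]: "case_prod F \<in> borel_measurable (lborel \<Otimes>\<^sub>M lborel)"
  shows "(\<integral>\<^sup>+y. \<integral>\<^sup>+x. F x (y + b * x) \<partial>lborel \<partial>lborel) = (\<integral>\<^sup>+y. \<integral>\<^sup>+x. F x y \<partial>lborel \<partial>lborel)"
proof -
  have "(\<integral>\<^sup>+y. F x y \<partial>lborel) = ennreal \<bar>1::real\<bar> * (\<integral>\<^sup>+y. F x (b * x + 1 * y) \<partial>lborel)" for x
    by (rule nn_integral_real_affine) simp_all
  then have "(\<integral>\<^sup>+x. \<integral>\<^sup>+y. F x (y + b * x) \<partial>lborel \<partial>lborel) = (\<integral>\<^sup>+x. \<integral>\<^sup>+y. F x y \<partial>lborel \<partial>lborel)"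
    by (simp add: add.commute)
  moreover have "(\<integral>\<^sup>+y. \<integral>\<^sup>+x. F x (y + b * x) \<partial>lborel \<partial>lborel)
      = (\<integral>\<^sup>+x. \<integral>\<^sup>+y. F x (y + b * x) \<partial>lborel \<partial>lborel)"
    by (rule lborel_pair.Fubini') measurable
  moreover have "(\<integral>\<^sup>+y. \<integral>\<^sup>+x. F x y \<partial>lborel \<partial>lborel) = (\<integral>\<^sup>+x. \<integral>\<^sup>+y. F x y \<partial>lborel \<partial>lborel)"
    by (rule lborel_pair.Fubini') measurable
  ultimately show ?thesis by simp
qed

text \<open>A rotation is a product of three shears:
  \<open>(x, y) \<mapsto> (x + \<alpha> y, y)\<close>, \<open>(x, y) \<mapsto> (x, y - s x)\<close>, \<open>(x, y) \<mapsto> (x + \<alpha> y, y)\<close> with \<open>\<alpha> = (1 - c) / s\<close>.\<close>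
lemma nn_integral_lborel_rotation:
  fixes F :: "real \<Rightarrow> real \<Rightarrow> ennreal" and c s :: real
  assumes [measurable]: "case_prod F \<in> borel_measurable (lborel \<Otimes>\<^sub>M lborel)"
    and cs: "c\<^sup>2 + s\<^sup>2 = 1" and s: "s \<noteq> 0"
  shows "(\<integral>\<^sup>+y. \<integral>\<^sup>+x. F (c * x + s * y) (c * y - s * x) \<partial>lborel \<partial>lborel)
    = (\<integral>\<^sup>+y. \<integral>\<^sup>+x. F x y \<partial>lborel \<partial>lborel)"
proof -
  define \<alpha> where "\<alpha> = (1 - c) / s"
  define F1 where "F1 x y = F (x + \<alpha> * y) y" for x y
  define F2 where "F2 x y = F1 x (y + (- s) * x)" for x y
  have [measurable]: "case_prod F1 \<in> borel_measurable (lborel \<Otimes>\<^sub>M lborel)"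
    "case_prod F2 \<in> borel_measurable (lborel \<Otimes>\<^sub>M lborel)"
    unfolding F1_def F2_def by measurable
  have \<alpha>s: "\<alpha> * s = 1 - c" using s by (simp add: \<alpha>_def)
  have \<alpha>c: "\<alpha> * (1 + c) = s"
  proof -
    have "\<alpha> * (1 + c) = (1 - c\<^sup>2) / s" by (simp add: \<alpha>_def power2_eq_square algebra_simps)
    also have "\<dots> = s" using cs s by (simp add: power2_eq_square field_simps)
    finally show ?thesis .
  qed
  have "F (c * x + s * y) (c * y - s * x) = F2 (x + \<alpha> * y) y" for x y
  proof -
    have "y + (- s) * (x + \<alpha> * y) = (1 - \<alpha> * s) * y - s * x"
      by (simp add: algebra_simps)
    then have "y + (- s) * (x + \<alpha> * y) = c * y - s * x"
      by (simp add: \<alpha>s)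
    moreover have "x + \<alpha> * y + \<alpha> * (c * y - s * x) = c * x + s * y"
    proof -
      have "x + \<alpha> * y + \<alpha> * (c * y - s * x) = (1 - \<alpha> * s) * x + (\<alpha> * (1 + c)) * y"
        by (simp add: algebra_simps)
      then show ?thesis by (simp add: \<alpha>s \<alpha>c)
    qed
    ultimately show ?thesis by (simp add: F2_def F1_def)
  qed
  then have "(\<integral>\<^sup>+y. \<integral>\<^sup>+x. F (c * x + s * y) (c * y - s * x) \<partial>lborel \<partial>lborel)
      = (\<integral>\<^sup>+y. \<integral>\<^sup>+x. F2 (x + \<alpha> * y) y \<partial>lborel \<partial>lborel)"
    by simp
  also have "\<dots> = (\<integral>\<^sup>+y. \<integral>\<^sup>+x. F2 x y \<partial>lborel \<partial>lborel)"
    by (rule nn_integral_lborel_shear_fst) measurable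
  also have "\<dots> = (\<integral>\<^sup>+y. \<integral>\<^sup>+x. F1 x y \<partial>lborel \<partial>lborel)"
    unfolding F2_def by (rule nn_integral_lborel_shear_snd) measurable
  also have "\<dots> = (\<integral>\<^sup>+y. \<integral>\<^sup>+x. F x y \<partial>lborel \<partial>lborel)"
    unfolding F1_def by (rule nn_integral_lborel_shear_fst) measurable
  finally show ?thesis .
qed

lemma nn_integral_std_normal_std_normal:
  fixes h :: "real \<Rightarrow> real \<Rightarrow> ennreal"
  assumes [measurable]: "case_prod h \<in> borel_measurable (lborel \<Otimes>\<^sub>M lborel)"
  shows "(\<integral>\<^sup>+y. \<integral>\<^sup>+x. h x y \<partial>std_normal \<partial>std_normal) =
    (\<integral>\<^sup>+y. \<integral>\<^sup>+x. ennreal (std_normal_density x * std_normal_density y) * h x y \<partial>lborel \<partial>lborel)"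
proof -
  have "(\<integral>\<^sup>+y. \<integral>\<^sup>+x. h x y \<partial>std_normal \<partial>std_normal)
      = (\<integral>\<^sup>+y. ennreal (std_normal_density y) * \<integral>\<^sup>+x. ennreal (std_normal_density x) * h x y \<partial>lborel \<partial>lborel)"
    by (simp add: nn_integral_std_normal)
  also have "\<dots> = (\<integral>\<^sup>+y. \<integral>\<^sup>+x. ennreal (std_normal_density x * std_normal_density y) * h x y \<partial>lborel \<partial>lborel)"
    by (simp add: nn_integral_cmult[symmetric] ennreal_mult mult_ac)
  finally show ?thesis .
qed

lemma nn_integral_std_normal_abs_scale:
  fixes f :: "real \<Rightarrow> real \<Rightarrow> ennreal"
  assumes [measurable]: "case_prod f \<in> borel_measurable (borel \<Otimes>\<^sub>M borel)"
  shows "(\<integral>\<^sup>+x. f (b * x) (x\<^sup>2) \<partial>std_normal) = (\<integral>\<^sup>+x. f (\<bar>b\<bar> * x) (x\<^sup>2) \<partial>std_normal)"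
  using nn_integral_std_normal_reflect[of "\<lambda>x. f (\<bar>b\<bar> * x) (x\<^sup>2)"]
  by (cases "0 \<le> b") simp_all

lemma nn_integral_std_normal_pair_rotation:
  fixes g :: "real \<times> real \<Rightarrow> ennreal" and a b :: real
  assumes [measurable]: "g \<in> borel_measurable (borel \<Otimes>\<^sub>M borel)"
  shows "(\<integral>\<^sup>+y. \<integral>\<^sup>+x. g (b * x + a * y, x\<^sup>2 + y\<^sup>2) \<partial>std_normal \<partial>std_normal) =
         (\<integral>\<^sup>+y. \<integral>\<^sup>+x. g (sqrt (a\<^sup>2 + b\<^sup>2) * x, x\<^sup>2 + y\<^sup>2) \<partial>std_normal \<partial>std_normal)"
proof (cases "a = 0")
  case True
  then show ?thesis
    using nn_integral_std_normal_abs_scale[of "\<lambda>u v. g (u, v + y\<^sup>2)" b for y] by simp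
next
  case False
  define r where "r = sqrt (a\<^sup>2 + b\<^sup>2)"
  have r: "0 < r" "r\<^sup>2 = a\<^sup>2 + b\<^sup>2" using False by (simp_all add: r_def add_pos_nonneg)
  define c where "c = b / r"
  define s where "s = a / r"
  have cs: "c\<^sup>2 + s\<^sup>2 = 1"
    using r False by (simp add: c_def s_def power_divide add_divide_distrib[symmetric] add.commute)
  have s: "s \<noteq> 0" unfolding s_def using \<open>a \<noteq> 0\<close> \<open>0 < r\<close> by simp
  define F where "F u v = ennreal (std_normal_density u * std_normal_density v) * g (r * u, u\<^sup>2 + v\<^sup>2)" for u v
  have [measurable]: "case_prod F \<in> borel_measurable (lborel \<Otimes>\<^sub>M lborel)"
    unfolding F_def by measurable
  have "std_normal_density u * std_normal_density v = exp (- (u\<^sup>2 + v\<^sup>2) / 2) / (2 * pi)" for u v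
    by (simp add: std_normal_density_def exp_add[symmetric] field_simps real_sqrt_mult[symmetric])
  moreover have "(c * x + s * y)\<^sup>2 + (c * y - s * x)\<^sup>2 = x\<^sup>2 + y\<^sup>2" for x y
  proof -
    have "(c * x + s * y)\<^sup>2 + (c * y - s * x)\<^sup>2 = (c\<^sup>2 + s\<^sup>2) * (x\<^sup>2 + y\<^sup>2)"
      by (simp add: power2_eq_square algebra_simps)
    then show ?thesis by (simp add: cs)
  qed
  moreover have "r * (c * x + s * y) = b * x + a * y" for x y
    using r by (simp add: c_def s_def field_simps)
  ultimately have F_rot: "F (c * x + s * y) (c * y - s * x)
      = ennreal (std_normal_density x * std_normal_density y) * g (b * x + a * y, x\<^sup>2 + y\<^sup>2)" for x y
    unfolding F_def by metis
  have "(\<integral>\<^sup>+y. \<integral>\<^sup>+x. g (b * x + a * y, x\<^sup>2 + y\<^sup>2) \<partial>std_normal \<partial>std_normal)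
      = (\<integral>\<^sup>+y. \<integral>\<^sup>+x. F (c * x + s * y) (c * y - s * x) \<partial>lborel \<partial>lborel)"
    by (simp add: F_rot nn_integral_std_normal_std_normal)
  also have "\<dots> = (\<integral>\<^sup>+y. \<integral>\<^sup>+x. F x y \<partial>lborel \<partial>lborel)"
    by (rule nn_integral_lborel_rotation) (use cs s in simp_all)
  also have "\<dots> = (\<integral>\<^sup>+y. \<integral>\<^sup>+x. g (r * x, x\<^sup>2 + y\<^sup>2) \<partial>std_normal \<partial>std_normal)"
    unfolding F_def by (rule nn_integral_std_normal_std_normal[symmetric]) measurable
  finally show ?thesis by (simp add: r_def)
qed

lemma sum_if_notin:
  assumes "j \<notin> I"
  shows "(\<Sum>i\<in>I. f i (if i = j then y else \<epsilon> i)) = (\<Sum>i\<in>I. f i (\<epsilon> i))"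
  using assms by (intro sum.cong) auto

text \<open>Induction on \<open>I\<close>: each new coordinate is merged into the distinguished one by a planar rotation.\<close>
lemma nn_integral_std_normal_PiM_rotation:
  fixes g :: "real \<times> real \<Rightarrow> ennreal" and a :: "nat \<Rightarrow> real"
  assumes "finite I" and "g \<in> borel_measurable (borel \<Otimes>\<^sub>M borel)"
  shows "(\<integral>\<^sup>+\<epsilon>. \<integral>\<^sup>+x. g (b * x + (\<Sum>i\<in>I. a i * \<epsilon> i), x\<^sup>2 + (\<Sum>i\<in>I. (\<epsilon> i)\<^sup>2)) \<partial>std_normal \<partial>std_normal_PiM I)
    = (\<integral>\<^sup>+\<epsilon>. \<integral>\<^sup>+x. g (sqrt (b\<^sup>2 + (\<Sum>i\<in>I. (a i)\<^sup>2)) * x, x\<^sup>2 + (\<Sum>i\<in>I. (\<epsilon> i)\<^sup>2)) \<partial>std_normal \<partial>std_normal_PiM I)"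
using assms proof (induction I arbitrary: b g rule: finite_induct)
  case empty
  then show ?case using nn_integral_std_normal_abs_scale[of "\<lambda>u v. g (u, v)" b] by simp
next
  case (insert j I)
  note [measurable] = insert.prems insert.hyps(1)
  define b' where "b' = sqrt ((a j)\<^sup>2 + b\<^sup>2)"
  let ?A = "\<lambda>\<epsilon>. \<Sum>i\<in>I. a i * \<epsilon> i"
  let ?S = "\<lambda>\<epsilon>. \<Sum>i\<in>I. (\<epsilon> i)\<^sup>2"
  define r where "r = sqrt (b'\<^sup>2 + (\<Sum>i\<in>I. (a i)\<^sup>2))"
  have r_eq: "r = sqrt (b\<^sup>2 + (\<Sum>i\<in>insert j I. (a i)\<^sup>2))"
    using insert.hyps by (simp add: r_def b'_def add_ac)
  have rotate_j: "(\<integral>\<^sup>+y. \<integral>\<^sup>+x. g (b * x + a j * y + ?A \<epsilon>, x\<^sup>2 + y\<^sup>2 + ?S \<epsilon>) \<partial>std_normal \<partial>std_normal)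
      = (\<integral>\<^sup>+y. \<integral>\<^sup>+x. g (b' * x + ?A \<epsilon>, x\<^sup>2 + y\<^sup>2 + ?S \<epsilon>) \<partial>std_normal \<partial>std_normal)" for \<epsilon>
    using nn_integral_std_normal_pair_rotation[of "\<lambda>(u, v). g (u + ?A \<epsilon>, v + ?S \<epsilon>)" b "a j"]
    by (simp add: b'_def)
  have rotate_I: "(\<integral>\<^sup>+\<epsilon>. \<integral>\<^sup>+x. g (b' * x + ?A \<epsilon>, x\<^sup>2 + ?S \<epsilon> + y\<^sup>2) \<partial>std_normal \<partial>std_normal_PiM I)
      = (\<integral>\<^sup>+\<epsilon>. \<integral>\<^sup>+x. g (r * x, x\<^sup>2 + ?S \<epsilon> + y\<^sup>2) \<partial>std_normal \<partial>std_normal_PiM I)" for y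
    using insert.IH[of "\<lambda>(u, v). g (u, v + y\<^sup>2)" b'] unfolding r_def by simp
  have "(\<integral>\<^sup>+\<epsilon>. \<integral>\<^sup>+x. g (b * x + (\<Sum>i\<in>insert j I. a i * \<epsilon> i), x\<^sup>2 + (\<Sum>i\<in>insert j I. (\<epsilon> i)\<^sup>2))
        \<partial>std_normal \<partial>std_normal_PiM (insert j I))
     = (\<integral>\<^sup>+\<epsilon>. \<integral>\<^sup>+y. \<integral>\<^sup>+x. g (b * x + (\<Sum>i\<in>insert j I. a i * (\<epsilon>(j := y)) i),
        x\<^sup>2 + (\<Sum>i\<in>insert j I. ((\<epsilon>(j := y)) i)\<^sup>2)) \<partial>std_normal \<partial>std_normal \<partial>std_normal_PiM I)"
    unfolding std_normal_PiM_def
    by (rule std_normal_product.product_nn_integral_insert) (use insert.hyps in measurable)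
  also have "\<dots> = (\<integral>\<^sup>+\<epsilon>. \<integral>\<^sup>+y. \<integral>\<^sup>+x. g (b * x + a j * y + ?A \<epsilon>, x\<^sup>2 + y\<^sup>2 + ?S \<epsilon>)
      \<partial>std_normal \<partial>std_normal \<partial>std_normal_PiM I)"
    using insert.hyps
    by (simp add: sum_if_notin[where f = "\<lambda>i v. a i * v"] sum_if_notin[where f = "\<lambda>i v. v\<^sup>2"] add_ac)
  also have "\<dots> = (\<integral>\<^sup>+y. \<integral>\<^sup>+\<epsilon>. \<integral>\<^sup>+x. g (b' * x + ?A \<epsilon>, x\<^sup>2 + ?S \<epsilon> + y\<^sup>2)
      \<partial>std_normal \<partial>std_normal_PiM I \<partial>std_normal)"
    unfolding rotate_j by (subst std_normal_PiM_pair.Fubini') (simp_all add: add_ac std_normal_PiM_def)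
  also have "\<dots> = (\<integral>\<^sup>+\<epsilon>. \<integral>\<^sup>+y. \<integral>\<^sup>+x. g (r * x, x\<^sup>2 + y\<^sup>2 + ?S \<epsilon>)
      \<partial>std_normal \<partial>std_normal \<partial>std_normal_PiM I)"
    unfolding rotate_I by (subst std_normal_PiM_pair.Fubini') (simp_all add: add_ac std_normal_PiM_def)
  also have "\<dots> = (\<integral>\<^sup>+\<epsilon>. \<integral>\<^sup>+y. \<integral>\<^sup>+x. g (r * x, x\<^sup>2 + (\<Sum>i\<in>insert j I. ((\<epsilon>(j := y)) i)\<^sup>2))
      \<partial>std_normal \<partial>std_normal \<partial>std_normal_PiM I)"
    using insert.hyps by (simp add: sum_if_notin[where f = "\<lambda>i v. v\<^sup>2"] add_ac)
  also have "\<dots> = (\<integral>\<^sup>+\<epsilon>. \<integral>\<^sup>+x. g (r * x, x\<^sup>2 + (\<Sum>i\<in>insert j I. (\<epsilon> i)\<^sup>2))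
      \<partial>std_normal \<partial>std_normal_PiM (insert j I))"
    unfolding std_normal_PiM_def
    by (rule std_normal_product.product_nn_integral_insert[symmetric]) (use insert.hyps in measurable)
  finally show ?case unfolding r_eq .
qed

lemma nn_integral_std_gauss_vec_inner_sum_squares:
  fixes g :: "real \<times> real \<Rightarrow> ennreal" and a :: "nat \<Rightarrow> real"
  assumes "1 \<le> m" and [measurable]: "g \<in> borel_measurable (borel \<Otimes>\<^sub>M borel)"
  shows "(\<integral>\<^sup>+\<epsilon>. g (vinner m a \<epsilon>, \<Sum>i<m. (\<epsilon> i)\<^sup>2) \<partial>std_gauss_vec m)
    = (\<integral>\<^sup>+\<epsilon>. \<integral>\<^sup>+x. g (vnorm m a * x, x\<^sup>2 + (\<Sum>i\<in>{1..<m}. (\<epsilon> i)\<^sup>2)) \<partial>std_normal \<partial>std_normal_PiM {1..<m})"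
proof -
  have ins: "{..<m} = insert 0 {1..<m}" using assms(1) by auto
  have "(\<integral>\<^sup>+\<epsilon>. g (vinner m a \<epsilon>, \<Sum>i<m. (\<epsilon> i)\<^sup>2) \<partial>std_gauss_vec m)
      = (\<integral>\<^sup>+\<epsilon>. g (\<Sum>i\<in>insert 0 {1..<m}. a i * \<epsilon> i, \<Sum>i\<in>insert 0 {1..<m}. (\<epsilon> i)\<^sup>2)
          \<partial>std_normal_PiM (insert 0 {1..<m}))"
    by (simp only: std_gauss_vec_eq_std_normal_PiM vinner_def ins)
  also have "\<dots> = (\<integral>\<^sup>+\<epsilon>. \<integral>\<^sup>+x. g (\<Sum>i\<in>insert 0 {1..<m}. a i * (\<epsilon>(0 := x)) i,
      \<Sum>i\<in>insert 0 {1..<m}. ((\<epsilon>(0 := x)) i)\<^sup>2) \<partial>std_normal \<partial>std_normal_PiM {1..<m})"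
    unfolding std_normal_PiM_def by (rule std_normal_product.product_nn_integral_insert) measurable
  also have "\<dots> = (\<integral>\<^sup>+\<epsilon>. \<integral>\<^sup>+x. g (a 0 * x + (\<Sum>i\<in>{1..<m}. a i * \<epsilon> i), x\<^sup>2 + (\<Sum>i\<in>{1..<m}. (\<epsilon> i)\<^sup>2))
      \<partial>std_normal \<partial>std_normal_PiM {1..<m})"
    by (simp add: sum_if_notin[where f = "\<lambda>i v. a i * v"] sum_if_notin[where f = "\<lambda>i v. v\<^sup>2"])
  also have "\<dots> = (\<integral>\<^sup>+\<epsilon>. \<integral>\<^sup>+x. g (sqrt ((a 0)\<^sup>2 + (\<Sum>i\<in>{1..<m}. (a i)\<^sup>2)) * x, x\<^sup>2 + (\<Sum>i\<in>{1..<m}. (\<epsilon> i)\<^sup>2))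
      \<partial>std_normal \<partial>std_normal_PiM {1..<m})"
    by (rule nn_integral_std_normal_PiM_rotation) simp_all
  also have "sqrt ((a 0)\<^sup>2 + (\<Sum>i\<in>{1..<m}. (a i)\<^sup>2)) = vnorm m a"
    unfolding vnorm_def ins by simp
  finally show ?thesis .
qed

lemma emeasure_std_gauss_vec_ratio_gt:
  fixes a :: "nat \<Rightarrow> real" and T :: real
  assumes "1 \<le> m"
  shows "emeasure (std_gauss_vec m) {\<epsilon> \<in> space (std_gauss_vec m). vinner m a \<epsilon> / vnorm m \<epsilon> > T}
    = (\<integral>\<^sup>+\<epsilon>. emeasure std_normal {x. T < vnorm m a * x / sqrt (x\<^sup>2 + (\<Sum>i\<in>{1..<m}. (\<epsilon> i)\<^sup>2))}
        \<partial>std_normal_PiM {1..<m})"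
proof -
  define g where "g p = (if T < fst p / sqrt (snd p) then 1 else 0 :: ennreal)" for p :: "real \<times> real"
  have [measurable]: "g \<in> borel_measurable (borel \<Otimes>\<^sub>M borel)" unfolding g_def by measurable
  define E where "E = {\<epsilon> \<in> space (std_gauss_vec m). vinner m a \<epsilon> / vnorm m \<epsilon> > T}"
  have "E \<in> sets (std_gauss_vec m)"
    unfolding E_def vinner_def vnorm_def std_gauss_vec_def by measurable
  then have "emeasure (std_gauss_vec m) E = (\<integral>\<^sup>+\<epsilon>. indicator E \<epsilon> \<partial>std_gauss_vec m)" by simp
  also have "\<dots> = (\<integral>\<^sup>+\<epsilon>. g (vinner m a \<epsilon>, \<Sum>i<m. (\<epsilon> i)\<^sup>2) \<partial>std_gauss_vec m)"
    by (rule nn_integral_cong) (simp add: E_def g_def vnorm_def)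
  also have "\<dots> = (\<integral>\<^sup>+\<epsilon>. \<integral>\<^sup>+x. g (vnorm m a * x, x\<^sup>2 + (\<Sum>i\<in>{1..<m}. (\<epsilon> i)\<^sup>2))
      \<partial>std_normal \<partial>std_normal_PiM {1..<m})"
    by (rule nn_integral_std_gauss_vec_inner_sum_squares) (use assms in simp_all)
  also have "\<dots> = (\<integral>\<^sup>+\<epsilon>. emeasure std_normal {x. T < vnorm m a * x / sqrt (x\<^sup>2 + (\<Sum>i\<in>{1..<m}. (\<epsilon> i)\<^sup>2))}
      \<partial>std_normal_PiM {1..<m})"
  proof (intro nn_integral_cong)
    fix S :: real
    have "{x \<in> space std_normal. T < vnorm m a * x / sqrt (x\<^sup>2 + S)} \<in> sets std_normal" by measurable
    then show "(\<integral>\<^sup>+x. g (vnorm m a * x, x\<^sup>2 + S) \<partial>std_normal)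
        = emeasure std_normal {x. T < vnorm m a * x / sqrt (x\<^sup>2 + S)}"
      by (simp add: g_def nn_integral_indicator[symmetric] indicator_def of_bool_def)
  qed
  finally show ?thesis unfolding E_def .
qed

section \<open>The tail bound\<close>

lemma div_sqrt_square_add_le_1:
  fixes x S :: real assumes "0 \<le> S" shows "x / sqrt (x\<^sup>2 + S) \<le> 1"
proof (cases "x \<le> 0")
  case False
  have "x \<le> sqrt (x\<^sup>2 + S)"
    using real_sqrt_le_mono[of "x\<^sup>2" "x\<^sup>2 + S"] assms False by simp
  moreover have "0 < sqrt (x\<^sup>2 + S)" using False assms by (simp add: add_pos_nonneg)
  ultimately show ?thesis by (simp add: divide_le_eq_1_pos)
next
  case True
  then have "x / sqrt (x\<^sup>2 + S) \<le> 0" using assms by (intro divide_nonpos_nonneg) auto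
  then show ?thesis by simp
qed

lemma ratio_gt_imp_gt_sqrt:
  fixes R t x S :: real
  assumes R: "0 \<le> R" and t: "0 < t" "t < 1" and S: "0 \<le> S"
    and gt: "t * R < R * x / sqrt (x\<^sup>2 + S)"
  shows "sqrt (t\<^sup>2 / (1 - t\<^sup>2) * S) < x"
proof -
  define q where "q = sqrt (x\<^sup>2 + S)"
  have "0 < R" using gt R by (cases "R = 0") auto
  have "R * x / sqrt (x\<^sup>2 + S) = R * (x / q)" by (simp add: q_def)
  then have "R * t < R * (x / q)" using gt by (simp only: mult.commute[of t R])
  then have "t < x / q" using \<open>0 < R\<close> by (simp only: mult_less_cancel_left_pos)
  moreover have "0 \<le> q" using S by (simp add: q_def)
  ultimately have "0 < q" using t by (cases "q = 0") auto
  then have "t * q < x" using \<open>t < x / q\<close> by (simp add: less_divide_eq)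
  moreover have "0 < t * q" using t \<open>0 < q\<close> by simp
  ultimately have "0 < x" "(t * q)\<^sup>2 < x\<^sup>2" by (auto intro!: power_strict_mono)
  then have "t\<^sup>2 * (x\<^sup>2 + S) < x\<^sup>2" using S by (simp add: q_def power_mult_distrib)
  then have "t\<^sup>2 / (1 - t\<^sup>2) * S < x\<^sup>2" using t by (simp add: field_simps power_less_one_iff)
  then have "sqrt (t\<^sup>2 / (1 - t\<^sup>2) * S) < sqrt (x\<^sup>2)" by (simp only: real_sqrt_less_iff)
  then show ?thesis using \<open>0 < x\<close> by simp
qed

lemma emeasure_std_normal_ratio_gt_le:
  fixes R t S w0 lam :: real
  assumes R: "0 \<le> R" and t: "0 < t" "t < 1" and S: "0 \<le> S" and w0: "0 < w0" and lam: "0 \<le> lam"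
  defines "c \<equiv> t\<^sup>2 / (1 - t\<^sup>2)"
  shows "emeasure std_normal {x. t * R < R * x / sqrt (x\<^sup>2 + S)}
    \<le> ennreal (1 / sqrt (2 * pi * c * w0) * exp (- (c / 2) * S) + 2 * exp (lam * w0) * exp (- (c / 2 + lam) * S))"
proof -
  have "{x. t * R < R * x / sqrt (x\<^sup>2 + S)} \<subseteq> {sqrt (c * S)<..}"
    using ratio_gt_imp_gt_sqrt[OF R t S] unfolding c_def by auto
  then have "emeasure std_normal {x. t * R < R * x / sqrt (x\<^sup>2 + S)} \<le> emeasure std_normal {sqrt (c * S)<..}"
    by (intro emeasure_mono) measurable
  also have "\<dots> \<le> ennreal (1 / sqrt (2 * pi * c * w0) * exp (- (c / 2) * S) + 2 * exp (lam * w0) * exp (- (c / 2 + lam) * S))"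
    using t by (intro std_normal_tail_sqrt_le S w0 lam) (simp add: c_def power_less_one_iff)
  finally show ?thesis .
qed

lemma emeasure_std_gauss_vec_ratio_gt_eq_0:
  fixes a :: "nat \<Rightarrow> real"
  assumes "1 \<le> m" and "1 \<le> t"
  shows "emeasure (std_gauss_vec m) {\<epsilon> \<in> space (std_gauss_vec m). vinner m a \<epsilon> / vnorm m \<epsilon> > t * vnorm m a} = 0"
proof -
  have "{x. t * vnorm m a < vnorm m a * x / sqrt (x\<^sup>2 + S)} = {}" if "0 \<le> S" for S
  proof -
    have "0 \<le> vnorm m a" by (simp add: vnorm_def sum_nonneg)
    have "vnorm m a * x / sqrt (x\<^sup>2 + S) \<le> vnorm m a" for x
    proof -
      have "vnorm m a * (x / sqrt (x\<^sup>2 + S)) \<le> vnorm m a * 1"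
        by (rule mult_left_mono[OF div_sqrt_square_add_le_1[OF that] \<open>0 \<le> vnorm m a\<close>])
      then show ?thesis by simp
    qed
    moreover have "vnorm m a \<le> t * vnorm m a"
      using \<open>0 \<le> vnorm m a\<close> assms(2) mult_right_mono by fastforce
    ultimately show ?thesis by (auto simp: not_less intro: order_trans)
  qed
  then show ?thesis
    by (simp add: emeasure_std_gauss_vec_ratio_gt[OF assms(1)] sum_nonneg)
qed

lemma emeasure_std_gauss_vec_ratio_gt_le:
  fixes a :: "nat \<Rightarrow> real" and t w0 lam :: real
  assumes m: "1 \<le> m" and t: "0 < t" "t < 1" and w0: "0 < w0" and lam: "0 \<le> lam"
  defines "c \<equiv> t\<^sup>2 / (1 - t\<^sup>2)" and "k \<equiv> real m - 1"
  shows "emeasure (std_gauss_vec m) {\<epsilon> \<in> space (std_gauss_vec m). vinner m a \<epsilon> / vnorm m \<epsilon> > t * vnorm m a}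
    \<le> ennreal (1 / sqrt (2 * pi * c * w0) * (1 + c) powr (- k / 2)
        + 2 * exp (lam * w0) * (1 + c + 2 * lam) powr (- k / 2))"
proof -
  let ?S = "\<lambda>\<epsilon>. \<Sum>i\<in>{1..<m}. (\<epsilon> i)\<^sup>2"
  define A where "A = 1 / sqrt (2 * pi * c * w0)"
  define B where "B = 2 * exp (lam * w0)"
  have c: "0 < c" using t by (simp add: c_def power_less_one_iff)
  have AB: "0 \<le> A" "0 \<le> B" using c w0 by (simp_all add: A_def B_def)
  have tail: "emeasure std_normal {x. t * vnorm m a < vnorm m a * x / sqrt (x\<^sup>2 + ?S \<epsilon>)}
      \<le> ennreal A * ennreal (exp (- (c / 2) * ?S \<epsilon>)) + ennreal B * ennreal (exp (- (c / 2 + lam) * ?S \<epsilon>))"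
    for \<epsilon>
  proof -
    have "emeasure std_normal {x. t * vnorm m a < vnorm m a * x / sqrt (x\<^sup>2 + ?S \<epsilon>)}
        \<le> ennreal (A * exp (- (c / 2) * ?S \<epsilon>) + B * exp (- (c / 2 + lam) * ?S \<epsilon>))"
      unfolding A_def B_def c_def
      by (rule emeasure_std_normal_ratio_gt_le) (simp_all add: vnorm_def sum_nonneg t w0 lam)
    then show ?thesis using AB by (simp add: ennreal_plus ennreal_mult)
  qed
  have card: "real (card {1..<m}) = k" using m by (simp add: k_def)
  have mgf: "(\<integral>\<^sup>+\<epsilon>. ennreal (exp (- \<beta> * ?S \<epsilon>)) \<partial>std_normal_PiM {1..<m})
      = ennreal ((1 + 2 * \<beta>) powr (- k / 2))" if "0 \<le> \<beta>" for \<beta>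
    using nn_integral_std_normal_PiM_exp_sum_squares[OF finite_atLeastLessThan[of 1 m] that]
    unfolding card .
  have "emeasure (std_gauss_vec m) {\<epsilon> \<in> space (std_gauss_vec m). vinner m a \<epsilon> / vnorm m \<epsilon> > t * vnorm m a}
      \<le> (\<integral>\<^sup>+\<epsilon>. ennreal A * ennreal (exp (- (c / 2) * ?S \<epsilon>)) + ennreal B * ennreal (exp (- (c / 2 + lam) * ?S \<epsilon>))
          \<partial>std_normal_PiM {1..<m})"
    unfolding emeasure_std_gauss_vec_ratio_gt[OF m] by (intro nn_integral_mono tail)
  also have "\<dots> = ennreal A * (\<integral>\<^sup>+\<epsilon>. ennreal (exp (- (c / 2) * ?S \<epsilon>)) \<partial>std_normal_PiM {1..<m})
      + ennreal B * (\<integral>\<^sup>+\<epsilon>. ennreal (exp (- (c / 2 + lam) * ?S \<epsilon>)) \<partial>std_normal_PiM {1..<m})"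
    unfolding std_normal_PiM_def by (subst nn_integral_add) (auto simp: nn_integral_cmult)
  also have "\<dots> = ennreal A * ennreal ((1 + c) powr (- k / 2))
      + ennreal B * ennreal ((1 + c + 2 * lam) powr (- k / 2))"
    using mgf[of "c / 2"] mgf[of "c / 2 + lam"] c lam by (simp add: add.assoc)
  also have "\<dots> = ennreal (A * (1 + c) powr (- k / 2) + B * (1 + c + 2 * lam) powr (- k / 2))"
    using AB by (simp add: ennreal_mult ennreal_plus)
  finally show ?thesis unfolding A_def B_def .
qed

text \<open>Choosing \<open>w\<^sub>0 = k (1 - t\<^sup>2) / 2\<close> and \<open>lam = 1 / (2 (1 - t\<^sup>2))\<close> makes both terms proportional to
  \<open>(1 - t\<^sup>2) powr (k / 2)\<close>.\<close>
lemma emeasure_std_gauss_vec_ratio_gt_le_powr: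
  fixes a :: "nat \<Rightarrow> real" and t :: real
  assumes m: "2 \<le> m" and t: "0 < t" "t < 1"
  defines "k \<equiv> real m - 1"
  shows "emeasure (std_gauss_vec m) {\<epsilon> \<in> space (std_gauss_vec m). vinner m a \<epsilon> / vnorm m \<epsilon> > t * vnorm m a}
    \<le> ennreal ((1 - t\<^sup>2) powr (k / 2) * (1 / sqrt (pi * k * t\<^sup>2) + 2 * exp (k / 4) * 2 powr (- k / 2)))"
proof -
  define u where "u = 1 - t\<^sup>2"
  define c where "c = t\<^sup>2 / u"
  define w0 where "w0 = k * u / 2"
  define lam where "lam = 1 / (2 * u)"
  have u: "0 < u" using t by (simp add: u_def power_less_one_iff)
  have k: "0 < k" using m by (simp add: k_def)
  have "emeasure (std_gauss_vec m) {\<epsilon> \<in> space (std_gauss_vec m). vinner m a \<epsilon> / vnorm m \<epsilon> > t * vnorm m a}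
      \<le> ennreal (1 / sqrt (2 * pi * c * w0) * (1 + c) powr (- k / 2)
          + 2 * exp (lam * w0) * (1 + c + 2 * lam) powr (- k / 2))"
    unfolding c_def u_def
    by (rule emeasure_std_gauss_vec_ratio_gt_le[of m t w0 lam a, folded k_def])
      (use m t u k in \<open>simp_all add: w0_def lam_def\<close>)
  also have "1 / sqrt (2 * pi * c * w0) * (1 + c) powr (- k / 2)
      + 2 * exp (lam * w0) * (1 + c + 2 * lam) powr (- k / 2)
    = u powr (k / 2) * (1 / sqrt (pi * k * t\<^sup>2) + 2 * exp (k / 4) * 2 powr (- k / 2))"
  proof -
    have "1 + c = 1 / u" using u by (simp add: c_def u_def field_simps)
    moreover have "1 + c + 2 * lam = 2 / u" unfolding \<open>1 + c = 1 / u\<close> using u by (simp add: lam_def field_simps)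
    moreover have "2 * pi * c * w0 = pi * k * t\<^sup>2" "lam * w0 = k / 4" using u by (simp_all add: c_def w0_def lam_def)
    ultimately show ?thesis using u by (simp add: powr_divide powr_minus_divide algebra_simps)
  qed
  finally show ?thesis unfolding u_def .
qed

definition tail_correction :: "nat \<Rightarrow> real" where
  "tail_correction m = 2 * sqrt (pi * real m) * exp (- (real m - 1) / 12)"

lemma tail_correction_tendsto_0: "tail_correction \<longlonglongrightarrow> 0"
  unfolding tail_correction_def by real_asymp

lemma measure_std_gauss_vec_ratio_gt_le:
  fixes a :: "nat \<Rightarrow> real" and n m :: nat and L :: real
  assumes m: "3 \<le> m" and n: "m \<le> n" and L: "real n - real m + 2 < L"
  shows "measure (std_gauss_vec m)
      {\<epsilon> \<in> space (std_gauss_vec m). vinner m a \<epsilon> / vnorm m \<epsilon> > sqrt (2 * L / real n) * vnorm m a}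
    \<le> (1 + tail_correction m) * exp (- L) / sqrt (pi * L)"
proof -
  define t where "t = sqrt (2 * L / real n)"
  define k where "k = real m - 1"
  have L0: "0 < L" using L n by simp
  have "0 \<le> (1 + tail_correction m) * exp (- L) / sqrt (pi * L)"
    using L0 by (simp add: tail_correction_def)
  moreover have "emeasure (std_gauss_vec m)
      {\<epsilon> \<in> space (std_gauss_vec m). vinner m a \<epsilon> / vnorm m \<epsilon> > t * vnorm m a}
    \<le> ennreal ((1 + tail_correction m) * exp (- L) / sqrt (pi * L))"
  proof (cases "t < 1")
    case True
    have t2: "t\<^sup>2 = 2 * L / real n" using L0 by (simp add: t_def)
    have "t\<^sup>2 < 1" using True L0 by (simp add: t_def)
    then have "2 * L < real n" using m n by (simp add: t2 divide_less_eq)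
    have "(1 - t\<^sup>2) powr (k / 2) * (1 / sqrt (pi * k * t\<^sup>2) + 2 * exp (k / 4) * 2 powr (- k / 2))
        \<le> (1 + 2 * sqrt (pi * (k + 1)) * exp (- k / 12)) * exp (- L) / sqrt (pi * L)"
      unfolding t2
    proof (rule tail_factor_bound)
      show "(1 - 2 * L / real n) powr (k / 2) \<le> exp (- L) * sqrt (k / real n)"
        by (rule one_minus_powr_half_le) (use m n L \<open>2 * L < real n\<close> in \<open>simp_all add: k_def\<close>)
    qed (use m n L \<open>2 * L < real n\<close> in \<open>simp_all add: k_def\<close>)
    moreover have "2 * sqrt (pi * (k + 1)) * exp (- k / 12) = tail_correction m"
      by (simp add: tail_correction_def k_def)
    ultimately have bound: "(1 - t\<^sup>2) powr (k / 2) * (1 / sqrt (pi * k * t\<^sup>2) + 2 * exp (k / 4) * 2 powr (- k / 2))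
      \<le> (1 + tail_correction m) * exp (- L) / sqrt (pi * L)" by simp
    have "0 < t" using L0 m n by (simp add: t_def)
    with True m have "emeasure (std_gauss_vec m)
        {\<epsilon> \<in> space (std_gauss_vec m). vinner m a \<epsilon> / vnorm m \<epsilon> > t * vnorm m a}
      \<le> ennreal ((1 - t\<^sup>2) powr (k / 2) * (1 / sqrt (pi * k * t\<^sup>2) + 2 * exp (k / 4) * 2 powr (- k / 2)))"
      unfolding k_def by (intro emeasure_std_gauss_vec_ratio_gt_le_powr) auto
    also have "\<dots> \<le> ennreal ((1 + tail_correction m) * exp (- L) / sqrt (pi * L))"
      using bound by (rule ennreal_leI)
    finally show ?thesis .
  next
    case False
    then show ?thesis using emeasure_std_gauss_vec_ratio_gt_eq_0[of m t a] m by simp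
  qed
  ultimately show ?thesis unfolding t_def measure_def by (rule enn2real_leI)
qed

theorem mainTheorem10:
  "\<exists>r :: nat \<Rightarrow> real. r \<longlonglongrightarrow> 0 \<and>
     (\<forall>(n::nat) (p::nat) (m::nat) (a::nat \<Rightarrow> real) (\<eta>::real).
        n \<ge> m \<longrightarrow> m \<ge> 3 \<longrightarrow> 0 < \<eta> \<longrightarrow>
        \<eta> < real p * exp (- (real n - real m) - 2) \<longrightarrow>
        measure (std_gauss_vec m)
          {\<epsilon> \<in> space (std_gauss_vec m).
             vinner m a \<epsilon> / vnorm m \<epsilon> >
               sqrt (2 * ln (real p / \<eta>) / real n) * vnorm m a}
        \<le> (1 / real p) * ((1 + r m) * \<eta> / sqrt (pi * ln (real p / \<eta>))))"
proof (intro exI[of _ tail_correction] conjI tail_correction_tendsto_0 allI impI)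
  fix n p m :: nat and a :: "nat \<Rightarrow> real" and \<eta> :: real
  assume n: "n \<ge> m" and m: "m \<ge> 3" and \<eta>: "0 < \<eta>" "\<eta> < real p * exp (- (real n - real m) - 2)"
  have "0 < real p * exp (- (real n - real m) - 2)" using \<eta> by linarith
  then have p: "0 < real p" by (simp add: zero_less_mult_iff)
  have "\<eta> * exp (real n - real m + 2) < real p * exp (- (real n - real m) - 2) * exp (real n - real m + 2)"
    using \<eta> by simp
  also have "\<dots> = real p" by (simp add: exp_add[symmetric])
  finally have "exp (real n - real m + 2) < real p / \<eta>" using \<eta> by (simp add: field_simps)
  then have "ln (exp (real n - real m + 2)) < ln (real p / \<eta>)"
    using \<eta> p by (subst ln_less_cancel_iff) auto
  then have "real n - real m + 2 < ln (real p / \<eta>)" by simp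
  from measure_std_gauss_vec_ratio_gt_le[OF m n this, of a]
  show "measure (std_gauss_vec m)
          {\<epsilon> \<in> space (std_gauss_vec m). vinner m a \<epsilon> / vnorm m \<epsilon> > sqrt (2 * ln (real p / \<eta>) / real n) * vnorm m a}
        \<le> (1 / real p) * ((1 + tail_correction m) * \<eta> / sqrt (pi * ln (real p / \<eta>)))"
    using \<eta> p by (simp add: exp_minus)
qed

end
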